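(* Let $\mathcal{H}$ be a complex Hilbert space, let $N(\cdot)$ be a norm on $\mathbb{B}(\mathcal{H})$, and let $T\in\mathbb{B}(\mathcal{H})$. Then $$w_{N}(T) \leq \inf_{\varphi \in \mathbb{R}}\sqrt{N^2\big({\rm Re}(e^{i\varphi}T)\big) + N^2\big({\rm Im}(e^{i\varphi}T)\big)}.$$
   Context: $\mathbb{B}(\mathcal{H})$ is the algebra of bounded linear operators on $\mathcal{H}$. For $A\in\mathbb{B}(\mathcal{H})$, ${\rm Re}(A)=\frac{A+A^*}{2}$ and ${\rm Im}(A)=\frac{A-A^*}{2i}$. For a norm $N(\cdot)$ on $\mathbb{B}(\mathcal{H})$, the generalized numerical radius is $w_N(T)=\sup_{\theta\in\mathbb{R}} N\big({\rm Re}(e^{i\theta}T)\big)$. *)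

theory Defs
  imports Complex_Main
begin

class complex_vector = real_vector +
  fixes scaleC :: "complex \<Rightarrow> 'a \<Rightarrow> 'a" (infixr "*\<^sub>C" 75)
  assumes scaleC_add_right: "a *\<^sub>C (x + y) = a *\<^sub>C x + a *\<^sub>C y"
    and scaleC_add_left: "(a + b) *\<^sub>C x = a *\<^sub>C x + b *\<^sub>C x"
    and scaleC_scaleC: "a *\<^sub>C (b *\<^sub>C x) = (a * b) *\<^sub>C x"
    and scaleC_one: "1 *\<^sub>C x = x"
    and scaleR_scaleC: "scaleR r x = (complex_of_real r) *\<^sub>C x"

class complex_inner = complex_vector + real_normed_vector +
  fixes cinner :: "'a \<Rightarrow> 'a \<Rightarrow> complex"
  assumes cinner_commute: "cinner x y = cnj (cinner y x)"
    and cinner_add_left: "cinner (x + y) z = cinner x z + cinner y z"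
    and cinner_scaleC_left: "cinner (r *\<^sub>C x) y = cnj r * cinner x y"
    and cinner_self_real: "Im (cinner x x) = 0"
    and cinner_self_nonneg: "0 \<le> Re (cinner x x)"
    and cinner_self_eq_zero: "cinner x x = 0 \<longleftrightarrow> x = 0"
    and norm_eq_sqrt_cinner: "norm x = sqrt (Re (cinner x x))"

class chilbert_space = complex_inner + complete_space

definition bounded_clinear_op :: "('a::complex_inner \<Rightarrow> 'a) \<Rightarrow> bool" where
  "bounded_clinear_op T \<longleftrightarrow>
     (\<forall>x y. T (x + y) = T x + T y) \<and> (\<forall>c x. T (c *\<^sub>C x) = c *\<^sub>C T x) \<and>
     (\<exists>K. \<forall>x. norm (T x) \<le> norm x * K)"

definition BH :: "('a::complex_inner \<Rightarrow> 'a) set" where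
  "BH = {T. bounded_clinear_op T}"

definition cadj :: "('a::complex_inner \<Rightarrow> 'a) \<Rightarrow> ('a \<Rightarrow> 'a)" where
  "cadj T = (SOME S. \<forall>x y. cinner (S x) y = cinner x (T y))"

definition opRe :: "('a::complex_inner \<Rightarrow> 'a) \<Rightarrow> ('a \<Rightarrow> 'a)" where
  "opRe A = (\<lambda>x. (1/2) *\<^sub>C (A x + cadj A x))"

definition opIm :: "('a::complex_inner \<Rightarrow> 'a) \<Rightarrow> ('a \<Rightarrow> 'a)" where
  "opIm A = (\<lambda>x. (1/(2*\<i>)) *\<^sub>C (A x - cadj A x))"

definition is_norm_on_BH :: "(('a::complex_inner \<Rightarrow> 'a) \<Rightarrow> real) \<Rightarrow> bool" where
  "is_norm_on_BH N \<longleftrightarrow>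
     (\<forall>A\<in>BH. 0 \<le> N A) \<and>
     (\<forall>A\<in>BH. N A = 0 \<longleftrightarrow> A = (\<lambda>_. 0)) \<and>
     (\<forall>A\<in>BH. \<forall>c. N (\<lambda>x. c *\<^sub>C A x) = cmod c * N A) \<and>
     (\<forall>A\<in>BH. \<forall>B\<in>BH. N (\<lambda>x. A x + B x) \<le> N A + N B)"

definition gen_num_radius :: "(('a::complex_inner \<Rightarrow> 'a) \<Rightarrow> real) \<Rightarrow> ('a \<Rightarrow> 'a) \<Rightarrow> real" where
  "gen_num_radius N T = (SUP \<theta>::real. N (opRe (\<lambda>x. exp (\<i> * complex_of_real \<theta>) *\<^sub>C T x)))"

end

theory Submission
  imports Defs "HOL-Analysis.Convex"
begin

(* Fix phi and put S = e^{i phi} T. For every theta, e^{i theta} T = u S with |u| = 1, and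
   Re(u S) = Re u Re(S) - Im u Im(S). Homogeneity and the triangle inequality of N give
   N(Re(e^{i theta} T)) <= |Re u| N(Re S) + |Im u| N(Im S), which is at most
   sqrt(N^2(Re S) + N^2(Im S)) by Cauchy-Schwarz in R^2; take the sup over theta and the inf
   over phi. The adjoint is characterised only implicitly (by Hilbert choice), so the identity
   for Re(u S), and the fact that Re S and Im S are bounded operators, rest on the existence of
   adjoints, i.e. on the Riesz representation theorem. *)

lemma scaleC_zero_left [simp]: "(0::complex) *\<^sub>C (x::'a::complex_vector) = 0"
  using scaleC_add_left[of 0 0 x] by simp

lemma scaleC_zero_right [simp]: "c *\<^sub>C (0::'a::complex_vector) = 0"
  using scaleC_add_right[of c 0 0] by simp

lemma scaleC_minus_one: "(-1) *\<^sub>C (x::'a::complex_vector) = - x"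
  using scaleR_scaleC[of "-1" x] by simp

lemma scaleC_minus_left: "(- c) *\<^sub>C (x::'a::complex_vector) = - (c *\<^sub>C x)"
  by (metis mult_minus1 scaleC_minus_one scaleC_scaleC)

lemma scaleC_minus_right: "c *\<^sub>C (- x::'a::complex_vector) = - (c *\<^sub>C x)"
  by (metis mult.commute scaleC_minus_left scaleC_minus_one scaleC_scaleC)

lemma scaleC_diff_left: "(c - d) *\<^sub>C (x::'a::complex_vector) = c *\<^sub>C x - d *\<^sub>C x"
  by (simp only: diff_conv_add_uminus scaleC_add_left scaleC_minus_left)

lemma scaleC_diff_right: "c *\<^sub>C (x - y::'a::complex_vector) = c *\<^sub>C x - c *\<^sub>C y"
  by (simp only: diff_conv_add_uminus scaleC_add_right scaleC_minus_right)

lemma cinner_add_right: "cinner x (y + z) = cinner x y + cinner x (z::'a::complex_inner)"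
  by (metis cinner_commute cinner_add_left complex_cnj_add)

lemma cinner_scaleC_right: "cinner x (r *\<^sub>C y) = r * cinner x (y::'a::complex_inner)"
  by (metis cinner_commute cinner_scaleC_left complex_cnj_cnj complex_cnj_mult)

lemma cinner_zero_left [simp]: "cinner 0 (y::'a::complex_inner) = 0"
  using cinner_scaleC_left[of 0 "0::'a" y] by simp

lemma cinner_zero_right [simp]: "cinner x (0::'a::complex_inner) = 0"
  using cinner_scaleC_right[of x 0 "0::'a"] by simp

lemma cinner_diff_left: "cinner (x - y) (z::'a::complex_inner) = cinner x z - cinner y z"
  using cinner_add_left[of x "-y" z] cinner_scaleC_left[of "-1" y z]
  by (simp add: scaleC_minus_one)

lemma cinner_diff_right: "cinner x (y - z::'a::complex_inner) = cinner x y - cinner x z"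
  by (metis cinner_commute cinner_diff_left complex_cnj_diff)

lemma cinner_self_eq_norm_power2: "cinner x (x::'a::complex_inner) = complex_of_real ((norm x)\<^sup>2)"
  using cinner_self_real[of x] cinner_self_nonneg[of x] norm_eq_sqrt_cinner[of x]
  by (simp add: complex_eq_iff)

lemma cinner_eqI: "(\<And>y. cinner a y = cinner b y) \<Longrightarrow> a = (b::'a::complex_inner)"
  by (metis cinner_diff_left cinner_self_eq_zero eq_iff_diff_eq_0)

lemma norm_scaleC: "norm (c *\<^sub>C (x::'a::complex_inner)) = cmod c * norm x"
proof -
  have "cinner (c *\<^sub>C x) (c *\<^sub>C x) = (cnj c * c) * cinner x x"
    by (simp add: cinner_scaleC_left cinner_scaleC_right)
  then have "complex_of_real ((norm (c *\<^sub>C x))\<^sup>2) = complex_of_real ((cmod c)\<^sup>2 * (norm x)\<^sup>2)"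
    by (simp only: cinner_self_eq_norm_power2 complex_norm_square of_real_mult
        mult.commute[of "cnj c" c])
  then have "(norm (c *\<^sub>C x))\<^sup>2 = (cmod c * norm x)\<^sup>2"
    by (simp only: of_real_eq_iff power_mult_distrib)
  then show ?thesis
    by (simp add: power2_eq_iff_nonneg)
qed

lemma parallelogram_law:
  "(norm (x + y))\<^sup>2 + (norm (x - y))\<^sup>2 = 2 * (norm x)\<^sup>2 + 2 * (norm (y::'a::complex_inner))\<^sup>2"
proof -
  have "cinner (x + y) (x + y) + cinner (x - y) (x - y) = 2 * cinner x x + 2 * cinner y y"
    by (simp add: cinner_add_left cinner_add_right cinner_diff_left cinner_diff_right)
  then have "complex_of_real ((norm (x + y))\<^sup>2 + (norm (x - y))\<^sup>2)
      = complex_of_real (2 * (norm x)\<^sup>2 + 2 * (norm y)\<^sup>2)"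
    by (simp add: cinner_self_eq_norm_power2)
  then show ?thesis
    by (simp only: of_real_eq_iff)
qed

lemma norm_diff_projection_power2:
  fixes x y :: "'a::complex_inner"
  assumes "y \<noteq> 0"
  shows "(norm (x - (cinner y x / cinner y y) *\<^sub>C y))\<^sup>2 = (norm x)\<^sup>2 - (cmod (cinner y x))\<^sup>2 / (norm y)\<^sup>2"
proof -
  define b where "b = cinner y x"
  define r where "r = (norm y)\<^sup>2"
  have r: "r \<noteq> 0" "cinner y y = complex_of_real r"
    using assms by (simp_all add: r_def cinner_self_eq_norm_power2)
  have "complex_of_real ((norm (x - (b / r) *\<^sub>C y))\<^sup>2) = cinner x x - b * cnj b / r"
    unfolding cinner_self_eq_norm_power2[symmetric] using r unfolding b_def
    by (simp add: cinner_diff_left cinner_diff_right cinner_scaleC_left cinner_scaleC_right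
        cinner_commute[of x y] field_simps)
  also have "\<dots> = complex_of_real ((norm x)\<^sup>2 - (cmod b)\<^sup>2 / r)"
    by (simp only: of_real_diff of_real_divide complex_norm_square cinner_self_eq_norm_power2)
  finally show ?thesis
    unfolding b_def r_def r(2)[unfolded r_def] of_real_eq_iff .
qed

lemma cinner_cauchy_schwarz: "cmod (cinner x y) \<le> norm x * norm (y::'a::complex_inner)"
proof (cases "x = 0")
  case False
  have "0 \<le> (norm (y - (cinner x y / cinner x x) *\<^sub>C x))\<^sup>2"
    by simp
  then have "(cmod (cinner x y))\<^sup>2 \<le> (norm x * norm y)\<^sup>2"
    using False by (simp add: norm_diff_projection_power2 field_simps power_mult_distrib)
  then show ?thesis
    by (rule power2_le_imp_le) simp
qed simp

lemma cinner_eq_zero_if_norm_minimal: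
  fixes x y :: "'a::complex_inner"
  assumes "\<And>t. norm x \<le> norm (x - t *\<^sub>C y)"
  shows "cinner x y = 0"
proof (cases "y = 0")
  case False
  have "(norm x)\<^sup>2 \<le> (norm (x - (cinner y x / cinner y y) *\<^sub>C y))\<^sup>2"
    using assms by (simp add: power_mono)
  then have "(cmod (cinner y x))\<^sup>2 / (norm y)\<^sup>2 \<le> 0"
    using False by (simp add: norm_diff_projection_power2)
  then have "cinner y x = 0"
    using False by (simp add: divide_le_0_iff)
  then show ?thesis
    by (metis cinner_commute complex_cnj_zero)
qed simp

lemma exists_min_norm_closed_convex:
  fixes A :: "'a::chilbert_space set"
  assumes "A \<noteq> {}" "closed A" "convex A"
  shows "\<exists>z\<in>A. \<forall>w\<in>A. norm z \<le> norm w"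
proof -
  define d where "d = Inf ((\<lambda>z. (norm z)\<^sup>2) ` A)"
  have d_le: "d \<le> (norm w)\<^sup>2" if "w \<in> A" for w
    unfolding d_def using that by (intro cInf_lower bdd_belowI[of _ 0]) auto
  have "\<exists>z\<in>A. (norm z)\<^sup>2 < d + inverse (real (Suc n))" for n
    using cInf_lessD[of "(\<lambda>z. (norm z)\<^sup>2) ` A" "d + inverse (real (Suc n))"] assms(1)
    unfolding d_def by auto
  then obtain z where zA: "\<And>n. z n \<in> A" and zn: "\<And>n. (norm (z n))\<^sup>2 < d + inverse (real (Suc n))"
    by metis
  \<comment> \<open>Midpoints stay in A, so the parallelogram law controls the distance of near-minimizers.\<close>
  have near: "(norm (u - v))\<^sup>2 \<le> 2 * (norm u)\<^sup>2 + 2 * (norm v)\<^sup>2 - 4 * d" if "u \<in> A" "v \<in> A" for u v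
  proof -
    have "(1/2) *\<^sub>R u + (1/2) *\<^sub>R v \<in> A"
      using convexD[OF assms(3) that] by simp
    then have "d \<le> (norm ((1/2) *\<^sub>R (u + v)))\<^sup>2"
      by (simp add: d_le scaleR_add_right)
    then have "4 * d \<le> (norm (u + v))\<^sup>2"
      by (simp add: power_divide)
    then show ?thesis
      using parallelogram_law[of u v] by linarith
  qed
  have "Cauchy z"
  proof (rule metric_CauchyI)
    fix e :: real
    assume "0 < e"
    then obtain M where M: "inverse (real (Suc M)) < e\<^sup>2 / 4"
      using reals_Archimedean[of "e\<^sup>2 / 4"] \<open>0 < e\<close> by auto
    have "dist (z m) (z n) < e" if "M \<le> m" "M \<le> n" for m n
    proof -
      have "inverse (real (Suc m)) \<le> inverse (real (Suc M))" "inverse (real (Suc n)) \<le> inverse (real (Suc M))"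
        using that by (simp_all add: le_imp_inverse_le)
      then have "(norm (z m - z n))\<^sup>2 < e\<^sup>2"
        using near[OF zA zA, of m n] zn[of m] zn[of n] M by linarith
      then show ?thesis
        using \<open>0 < e\<close> by (simp add: dist_norm power_less_imp_less_base)
    qed
    then show "\<exists>M. \<forall>m\<ge>M. \<forall>n\<ge>M. dist (z m) (z n) < e"
      by blast
  qed
  then obtain z0 where lim: "z \<longlonglongrightarrow> z0"
    by (auto simp: Cauchy_convergent_iff convergent_def)
  have "z0 \<in> A"
    using closed_sequentially[OF assms(2) zA lim] .
  moreover have "(norm z0)\<^sup>2 \<le> d"
  proof (rule LIMSEQ_le)
    show "(\<lambda>n. (norm (z n))\<^sup>2) \<longlonglongrightarrow> (norm z0)\<^sup>2"
      by (intro tendsto_intros lim)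
    show "(\<lambda>n. d + inverse (real (Suc n))) \<longlonglongrightarrow> d"
      using tendsto_add[OF tendsto_const LIMSEQ_inverse_real_of_nat, of d] by simp
    show "\<exists>N. \<forall>n\<ge>N. (norm (z n))\<^sup>2 \<le> d + inverse (real (Suc n))"
      using zn less_imp_le by blast
  qed
  ultimately show ?thesis
    using d_le by (meson norm_ge_zero order_trans power2_le_imp_le)
qed

lemma riesz_representation:
  fixes f :: "'a::chilbert_space \<Rightarrow> complex"
  assumes add: "\<And>x y. f (x + y) = f x + f y"
    and scale: "\<And>c x. f (c *\<^sub>C x) = c * f x"
    and bound: "\<And>x. cmod (f x) \<le> norm x * K"
  shows "\<exists>w. \<forall>y. f y = cinner w y"
proof (cases "\<forall>x. f x = 0")
  case False
  then obtain x0 where x0: "f x0 \<noteq> 0"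
    by blast
  have "bounded_linear f"
    by (rule bounded_linear_intro[OF add _ bound]) (simp add: scaleR_scaleC scale scaleR_conv_of_real)
  then have "closed (f -` {1})" "convex (f -` {1})"
    by (simp_all add: closed_vimage linear_continuous_on convex_linear_vimage bounded_linear.linear)
  moreover have "(1 / f x0) *\<^sub>C x0 \<in> f -` {1}"
    using x0 by (simp add: scale)
  ultimately obtain z where z: "f z = 1" and z_min: "\<And>w. f w = 1 \<Longrightarrow> norm z \<le> norm w"
    using exists_min_norm_closed_convex[of "f -` {1}"] by blast
  have diff: "f (x - y) = f x - f y" for x y
    using add[of "x - y" y] by simp
  have orth: "cinner z k = 0" if "f k = 0" for k
  proof (rule cinner_eq_zero_if_norm_minimal)
    show "norm z \<le> norm (z - t *\<^sub>C k)" for t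
      by (rule z_min) (simp add: diff scale z that)
  qed
  have "f 0 = 0"
    using scale[of 0 0] by simp
  then have c: "cinner z z \<noteq> 0" "cnj (cinner z z) = cinner z z"
    using z cinner_self_eq_zero[of z] cinner_commute[of z z] by auto
  have "f y = cinner ((1 / cnj (cinner z z)) *\<^sub>C z) y" for y
  proof -
    have "cinner z (y - f y *\<^sub>C z) = 0"
      by (rule orth) (simp add: diff scale z)
    then show ?thesis
      using c by (simp add: cinner_diff_right cinner_scaleC_left cinner_scaleC_right field_simps)
  qed
  then show ?thesis
    by blast
qed (auto intro: exI[of _ 0])

lemma bounded_clinear_op_scaleC:
  assumes "bounded_clinear_op A"
  shows "bounded_clinear_op (\<lambda>x. c *\<^sub>C A x)"
proof -
  obtain K where add: "\<And>x y. A (x + y) = A x + A y" and scale: "\<And>d x. A (d *\<^sub>C x) = d *\<^sub>C A x"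
    and bound: "\<And>x. norm (A x) \<le> norm x * K"
    using assms unfolding bounded_clinear_op_def by blast
  have "c *\<^sub>C A (x + y) = c *\<^sub>C A x + c *\<^sub>C A y" for x y
    by (simp add: add scaleC_add_right)
  moreover have "c *\<^sub>C A (d *\<^sub>C x) = d *\<^sub>C (c *\<^sub>C A x)" for d x
    by (simp add: scale scaleC_scaleC mult.commute)
  moreover have "norm (c *\<^sub>C A x) \<le> norm x * (cmod c * K)" for x
    using mult_left_mono[OF bound[of x], of "cmod c"] by (simp add: norm_scaleC mult_ac)
  ultimately show ?thesis
    unfolding bounded_clinear_op_def by blast
qed

lemma bounded_clinear_op_add:
  assumes "bounded_clinear_op A" "bounded_clinear_op B"
  shows "bounded_clinear_op (\<lambda>x. A x + B x)"
proof -
  obtain K where addA: "\<And>x y. A (x + y) = A x + A y" and scaleA: "\<And>d x. A (d *\<^sub>C x) = d *\<^sub>C A x"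
    and boundA: "\<And>x. norm (A x) \<le> norm x * K"
    using assms(1) unfolding bounded_clinear_op_def by blast
  obtain L where addB: "\<And>x y. B (x + y) = B x + B y" and scaleB: "\<And>d x. B (d *\<^sub>C x) = d *\<^sub>C B x"
    and boundB: "\<And>x. norm (B x) \<le> norm x * L"
    using assms(2) unfolding bounded_clinear_op_def by blast
  have "A (x + y) + B (x + y) = (A x + B x) + (A y + B y)" for x y
    by (simp add: addA addB)
  moreover have "A (d *\<^sub>C x) + B (d *\<^sub>C x) = d *\<^sub>C (A x + B x)" for d x
    by (simp add: scaleA scaleB scaleC_add_right)
  moreover have "norm (A x + B x) \<le> norm x * (K + L)" for x
    using norm_triangle_ineq[of "A x" "B x"] boundA[of x] boundB[of x] by (simp add: distrib_left)
  ultimately show ?thesis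
    unfolding bounded_clinear_op_def by blast
qed

lemma bounded_clinear_op_diff:
  assumes "bounded_clinear_op A" "bounded_clinear_op B"
  shows "bounded_clinear_op (\<lambda>x. A x - B x)"
  using bounded_clinear_op_add[OF assms(1) bounded_clinear_op_scaleC[OF assms(2), of "-1"]]
  by (simp add: scaleC_minus_one)

lemma cadj_cinner:
  fixes T :: "'a::chilbert_space \<Rightarrow> 'a"
  assumes "bounded_clinear_op T"
  shows "cinner (cadj T x) y = cinner x (T y)"
proof -
  obtain K where add: "\<And>x y. T (x + y) = T x + T y" and scale: "\<And>c x. T (c *\<^sub>C x) = c *\<^sub>C T x"
    and bound: "\<And>x. norm (T x) \<le> norm x * K"
    using assms unfolding bounded_clinear_op_def by blast
  have "\<exists>w. \<forall>y. cinner x (T y) = cinner w y" for x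
  proof (rule riesz_representation)
    show "cmod (cinner x (T y)) \<le> norm y * (norm x * K)" for y
      using cinner_cauchy_schwarz[of x "T y"] mult_left_mono[OF bound[of y], of "norm x"]
      by (simp add: mult_ac)
  qed (simp_all add: add scale cinner_add_right cinner_scaleC_right)
  then have "\<exists>S. \<forall>x y. cinner (S x) y = cinner x (T y)"
    by metis
  from someI_ex[OF this] show ?thesis
    unfolding cadj_def by blast
qed

lemma bounded_clinear_op_cadj:
  fixes T :: "'a::chilbert_space \<Rightarrow> 'a"
  assumes T: "bounded_clinear_op T"
  shows "bounded_clinear_op (cadj T)"
proof -
  obtain K where bound: "\<And>x. norm (T x) \<le> norm x * K"
    using T unfolding bounded_clinear_op_def by blast
  have add: "cadj T (x + y) = cadj T x + cadj T y" for x y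
    by (rule cinner_eqI) (simp add: cadj_cinner[OF T] cinner_add_left)
  have scale: "cadj T (c *\<^sub>C x) = c *\<^sub>C cadj T x" for c x
    by (rule cinner_eqI) (simp add: cadj_cinner[OF T] cinner_scaleC_left)
  have "norm (cadj T x) \<le> norm x * K" for x
  proof -
    have "(norm (cadj T x))\<^sup>2 = Re (cinner (cadj T x) (cadj T x))"
      by (simp only: cinner_self_eq_norm_power2 Re_complex_of_real)
    also have "\<dots> \<le> cmod (cinner x (T (cadj T x)))"
      unfolding cadj_cinner[OF T] by (rule complex_Re_le_cmod)
    also have "\<dots> \<le> norm x * (norm (cadj T x) * K)"
      using cinner_cauchy_schwarz[of x "T (cadj T x)"] mult_left_mono[OF bound, of "norm x"]
      by (meson norm_ge_zero order_trans)
    finally have "norm (cadj T x) * norm (cadj T x) \<le> (norm x * K) * norm (cadj T x)"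
      by (simp add: power2_eq_square mult_ac)
    moreover have "0 \<le> norm x * K"
      using bound[of x] norm_ge_zero order_trans by blast
    ultimately show ?thesis
      by (cases "cadj T x = 0") auto
  qed
  then show ?thesis
    unfolding bounded_clinear_op_def using add scale by blast
qed

lemma cadj_scaleC:
  fixes S :: "'a::chilbert_space \<Rightarrow> 'a"
  assumes S: "bounded_clinear_op S"
  shows "cadj (\<lambda>x. u *\<^sub>C S x) x = cnj u *\<^sub>C cadj S x"
  by (rule cinner_eqI)
    (simp add: cadj_cinner[OF S] cadj_cinner[OF bounded_clinear_op_scaleC[OF S]]
      cinner_scaleC_left cinner_scaleC_right)

lemma bounded_clinear_op_opRe:
  fixes S :: "'a::chilbert_space \<Rightarrow> 'a"
  assumes "bounded_clinear_op S"
  shows "bounded_clinear_op (opRe S)"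
  unfolding opRe_def
  by (intro bounded_clinear_op_scaleC bounded_clinear_op_add bounded_clinear_op_cadj assms)

lemma bounded_clinear_op_opIm:
  fixes S :: "'a::chilbert_space \<Rightarrow> 'a"
  assumes "bounded_clinear_op S"
  shows "bounded_clinear_op (opIm S)"
  unfolding opIm_def
  by (intro bounded_clinear_op_scaleC bounded_clinear_op_diff bounded_clinear_op_cadj assms)

lemma opRe_scaleC:
  fixes S :: "'a::chilbert_space \<Rightarrow> 'a"
  assumes S: "bounded_clinear_op S"
  shows "opRe (\<lambda>x. u *\<^sub>C S x) =
    (\<lambda>x. complex_of_real (Re u) *\<^sub>C opRe S x + complex_of_real (- Im u) *\<^sub>C opIm S x)"
proof
  fix x
  define a b where "a = S x" and "b = cadj S x"
  have collect: "p *\<^sub>C a + p *\<^sub>C b + (q *\<^sub>C a - q *\<^sub>C b) = (p + q) *\<^sub>C a + (p - q) *\<^sub>C b"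
    for p q :: complex
    by (simp add: scaleC_add_left scaleC_diff_left algebra_simps)
  have coeff: "complex_of_real (Re u) * (1/2) + complex_of_real (- Im u) * (1 / (2 * \<i>)) = u / 2"
    "complex_of_real (Re u) * (1/2) - complex_of_real (- Im u) * (1 / (2 * \<i>)) = cnj u / 2"
    by (simp_all add: complex_eq_iff)
  have "complex_of_real (Re u) *\<^sub>C opRe S x + complex_of_real (- Im u) *\<^sub>C opIm S x
      = (u / 2) *\<^sub>C a + (cnj u / 2) *\<^sub>C b"
    unfolding opRe_def opIm_def a_def[symmetric] b_def[symmetric]
    by (simp only: scaleC_add_right scaleC_diff_right scaleC_scaleC collect coeff)
  also have "\<dots> = opRe (\<lambda>x. u *\<^sub>C S x) x"
    unfolding opRe_def cadj_scaleC[OF S] a_def b_def by (simp add: scaleC_add_right scaleC_scaleC)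
  finally show "opRe (\<lambda>x. u *\<^sub>C S x) x =
      complex_of_real (Re u) *\<^sub>C opRe S x + complex_of_real (- Im u) *\<^sub>C opIm S x" ..
qed

lemma abs_mult_add_abs_mult_le_sqrt:
  fixes a b c s :: real
  assumes "c\<^sup>2 + s\<^sup>2 = 1"
  shows "\<bar>c\<bar> * a + \<bar>s\<bar> * b \<le> sqrt (a\<^sup>2 + b\<^sup>2)"
proof (rule real_le_rsqrt)
  have "(\<bar>c\<bar> * a + \<bar>s\<bar> * b)\<^sup>2 + (\<bar>c\<bar> * b - \<bar>s\<bar> * a)\<^sup>2 = (c\<^sup>2 + s\<^sup>2) * (a\<^sup>2 + b\<^sup>2)"
    by (simp add: power2_eq_square algebra_simps abs_mult_self_eq)
  also have "\<dots> = a\<^sup>2 + b\<^sup>2"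
    using assms by simp
  finally show "(\<bar>c\<bar> * a + \<bar>s\<bar> * b)\<^sup>2 \<le> a\<^sup>2 + b\<^sup>2"
    using zero_le_power2[of "\<bar>c\<bar> * b - \<bar>s\<bar> * a"] by linarith
qed

lemma norm_opRe_scaleC_le:
  fixes N :: "('a::chilbert_space \<Rightarrow> 'a) \<Rightarrow> real"
  assumes N: "is_norm_on_BH N" and S: "S \<in> BH" and u: "cmod u = 1"
  shows "N (opRe (\<lambda>x. u *\<^sub>C S x)) \<le> sqrt ((N (opRe S))\<^sup>2 + (N (opIm S))\<^sup>2)"
proof -
  have S_bounded: "bounded_clinear_op S"
    using S unfolding BH_def by simp
  then have Re_S: "opRe S \<in> BH" and Im_S: "opIm S \<in> BH"
    using bounded_clinear_op_opRe bounded_clinear_op_opIm unfolding BH_def by auto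
  have scale_BH: "(\<lambda>x. c *\<^sub>C A x) \<in> BH" if "A \<in> BH" for A and c
    using that bounded_clinear_op_scaleC unfolding BH_def by auto
  have triangle: "\<forall>A\<in>BH. \<forall>B\<in>BH. N (\<lambda>x. A x + B x) \<le> N A + N B"
    using N unfolding is_norm_on_BH_def by blast
  have "N (opRe (\<lambda>x. u *\<^sub>C S x))
      \<le> N (\<lambda>x. complex_of_real (Re u) *\<^sub>C opRe S x) + N (\<lambda>x. complex_of_real (- Im u) *\<^sub>C opIm S x)"
    unfolding opRe_scaleC[OF S_bounded]
    using triangle[rule_format, OF scale_BH[OF Re_S] scale_BH[OF Im_S]] .
  also have "\<dots> = \<bar>Re u\<bar> * N (opRe S) + \<bar>Im u\<bar> * N (opIm S)"
    using N Re_S Im_S unfolding is_norm_on_BH_def by simp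
  also have "\<dots> \<le> sqrt ((N (opRe S))\<^sup>2 + (N (opIm S))\<^sup>2)"
    using u cmod_power2[of u] by (intro abs_mult_add_abs_mult_le_sqrt) simp
  finally show ?thesis .
qed

theorem theorem2p1:
  fixes N :: "('h::chilbert_space \<Rightarrow> 'h) \<Rightarrow> real" and T :: "'h \<Rightarrow> 'h"
  assumes "is_norm_on_BH N" and "T \<in> BH"
  shows "gen_num_radius N T \<le>
    (INF \<phi>::real. sqrt ((N (opRe (\<lambda>x. exp (\<i> * complex_of_real \<phi>) *\<^sub>C T x)))\<^sup>2
                        + (N (opIm (\<lambda>x. exp (\<i> * complex_of_real \<phi>) *\<^sub>C T x)))\<^sup>2))"
  unfolding gen_num_radius_def
proof (intro cINF_greatest cSUP_least)
  fix \<phi> \<theta> :: real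
  define S where "S = (\<lambda>x. exp (\<i> * complex_of_real \<phi>) *\<^sub>C T x)"
  have "S \<in> BH"
    using assms(2) bounded_clinear_op_scaleC unfolding S_def BH_def by auto
  moreover have "(\<lambda>x. exp (\<i> * complex_of_real \<theta>) *\<^sub>C T x)
      = (\<lambda>x. exp (\<i> * complex_of_real (\<theta> - \<phi>)) *\<^sub>C S x)"
    unfolding S_def by (simp add: scaleC_scaleC algebra_simps flip: exp_add)
  ultimately show "N (opRe (\<lambda>x. exp (\<i> * complex_of_real \<theta>) *\<^sub>C T x)) \<le>
      sqrt ((N (opRe S))\<^sup>2 + (N (opIm S))\<^sup>2)"
    using norm_opRe_scaleC_le[OF assms(1)] by simp
qed simp_all

end
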